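(* Let $G$ be a finite simple graph with at least one edge. Then $\mathrm{v}(I(G))\le\beta(G)$. Moreover, $\mathrm{v}(I(G))=\beta(G)$ if and only if every connected component of $G$ that has at least one edge is a star graph $K_{1,m}$ for some $m\ge1$.
   Context: For a graph $G$, $R=\mathbb{K}[V(G)]$ is the polynomial ring over a field $\mathbb{K}$ in the vertices, and $I(G)=(x_ix_j\mid\{x_i,x_j\}\in E(G))$ is the edge ideal. The v-number of a proper graded ideal $I\subseteq R$ is $\mathrm{v}(I)=\min\{d\ge0\mid\exists f\in R_d,\ \mathfrak p\in\mathrm{Ass}(I),\ I:(f)=\mathfrak p\}$. A vertex cover of $G$ is a set $C\subseteq V(G)$ meeting every edge; $\beta(G)$ is the minimum size of a vertex cover. The star graph $K_{1,m}$ has vertices $x_0,x_1,\ldots,x_m$ and edges $\{x_0,x_i\}$, $1\le i\le m$. *)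

theory Defs
  imports Main "HOL-Library.Poly_Mapping"
begin

text \<open>Polynomial ring K[V] in the variables of type 'v (the vertex type, assumed finite),
  represented as finitely supported maps from monomials (exponent vectors) to coefficients.\<close>

type_synonym ('v, 'k) mpoly = "('v \<Rightarrow>\<^sub>0 nat) \<Rightarrow>\<^sub>0 'k"

definition var :: "'v \<Rightarrow> ('v, 'k::comm_ring_1) mpoly" where
  "var x = Poly_Mapping.single (Poly_Mapping.single x 1) 1"

definition mon_deg :: "('v \<Rightarrow>\<^sub>0 nat) \<Rightarrow> nat" where
  "mon_deg m = (\<Sum>x\<in>Poly_Mapping.keys m. Poly_Mapping.lookup m x)"

text \<open>f lies in the homogeneous component R_d (0 included).\<close>
definition homogeneous_of_deg :: "nat \<Rightarrow> ('v, 'k::comm_ring_1) mpoly \<Rightarrow> bool" where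
  "homogeneous_of_deg d f \<longleftrightarrow> (\<forall>m\<in>Poly_Mapping.keys f. mon_deg m = d)"

definition is_ideal :: "'a::comm_ring_1 set \<Rightarrow> bool" where
  "is_ideal I \<longleftrightarrow> 0 \<in> I \<and> (\<forall>a\<in>I. \<forall>b\<in>I. a + b \<in> I) \<and> (\<forall>a\<in>I. \<forall>r. r * a \<in> I)"

definition ideal_gen :: "'a::comm_ring_1 set \<Rightarrow> 'a set" where
  "ideal_gen S = \<Inter>{I. is_ideal I \<and> S \<subseteq> I}"

definition prime_ideal :: "'a::comm_ring_1 set \<Rightarrow> bool" where
  "prime_ideal P \<longleftrightarrow> is_ideal P \<and> P \<noteq> UNIV \<and> (\<forall>a b. a * b \<in> P \<longrightarrow> a \<in> P \<or> b \<in> P)"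

definition colon :: "'a::comm_ring_1 set \<Rightarrow> 'a \<Rightarrow> 'a set" where
  "colon I f = {g. g * f \<in> I}"

text \<open>Associated primes of I (R is Noetherian): primes of the form I : (g).\<close>
definition Ass :: "'a::comm_ring_1 set \<Rightarrow> 'a set set" where
  "Ass I = {P. prime_ideal P \<and> (\<exists>g. colon I g = P)}"

definition v_number :: "('v, 'k::field) mpoly set \<Rightarrow> nat" where
  "v_number I = (LEAST d. \<exists>f P. homogeneous_of_deg d f \<and> P \<in> Ass I \<and> colon I f = P)"

definition simple_graph :: "'v set set \<Rightarrow> bool" where
  "simple_graph E \<longleftrightarrow> (\<forall>e\<in>E. card e = 2)"

definition edge_ideal :: "'v set set \<Rightarrow> ('v, 'k::field) mpoly set" where
  "edge_ideal E = ideal_gen {var x * var y | x y. {x, y} \<in> E \<and> x \<noteq> y}"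

definition vertex_cover :: "'v set set \<Rightarrow> 'v set \<Rightarrow> bool" where
  "vertex_cover E C \<longleftrightarrow> (\<forall>e\<in>E. e \<inter> C \<noteq> {})"

definition cover_number :: "'v set set \<Rightarrow> nat" where
  "cover_number E = (LEAST n. \<exists>C. vertex_cover E C \<and> card C = n)"

definition adj :: "'v set set \<Rightarrow> 'v \<Rightarrow> 'v \<Rightarrow> bool" where
  "adj E x y \<longleftrightarrow> {x, y} \<in> E \<and> x \<noteq> y"

definition component :: "'v set set \<Rightarrow> 'v \<Rightarrow> 'v set" where
  "component E v = {u. (adj E)\<^sup>*\<^sup>* v u}"

definition is_star_on :: "'v set set \<Rightarrow> 'v set \<Rightarrow> bool" where
  "is_star_on E S \<longleftrightarrow> (\<exists>c\<in>S. S - {c} \<noteq> {} \<and> (\<forall>x\<in>S - {c}. {c, x} \<in> E)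
       \<and> (\<forall>e\<in>E. e \<subseteq> S \<longrightarrow> c \<in> e))"

end

theory Submission
  imports Defs
begin

text \<open>
  Write N(A) for the set of neighbours of a vertex set A. If A is independent and N(A) covers
  every edge, the colon ideal I(G) : x^A is generated by the variables of N(A), hence prime,
  so v(I(G)) <= |A|. Conversely, if I(G) : f is prime for a homogeneous f of degree d, some
  term u of f lies outside I(G); its support A is independent with |A| <= d, the variables in
  the prime form a vertex cover, and each of them is a neighbour of A because it multiplies u
  into I(G). So v(I(G)) is the least |A| over independent sets A with N(A) a vertex cover.

  A maximal independent subset A of a minimum vertex cover C has N(A) covering, which gives
  v(I(G)) <= beta(G). If C contains an edge c c', or some vertex w outside C has two neighbours
  c, c' in C, a maximal independent set grown from {c} inside C, resp. from {w} inside C + w,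
  avoids c', resp. c and c', and is smaller than C. Otherwise C is independent and every vertex
  outside C has a unique neighbour in C, so every component with an edge is a star centred in C.
  Conversely, in a star forest the centres of the stars meeting A cover all edges whenever N(A)
  does, so beta(G) <= |A|.
\<close>

section \<open>Polynomial rings\<close>

lemma poly_mapping_sum_single:
  "f = (\<Sum>m\<in>Poly_Mapping.keys f. Poly_Mapping.single m (Poly_Mapping.lookup f m))"
  by (rule poly_mapping_eqI) (simp add: lookup_sum lookup_single when_def in_keys_iff)

lemma mult_neq_zero_if_order_embedding:
  fixes f g :: "'a::cancel_comm_monoid_add \<Rightarrow>\<^sub>0 'k::semiring_no_zero_divisors"
    and \<psi> :: "'a \<Rightarrow> 'b::linordered_cancel_ab_semigroup_add"
  assumes "inj \<psi>" and \<psi>_add: "\<And>a b. \<psi> (a + b) = \<psi> a + \<psi> b"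
    and "f \<noteq> 0" and "g \<noteq> 0"
  shows "f * g \<noteq> 0"
proof -
  define F G where "F = Poly_Mapping.keys f" and "G = Poly_Mapping.keys g"
  have "finite F" "F \<noteq> {}" "finite G" "G \<noteq> {}"
    using \<open>f \<noteq> 0\<close> \<open>g \<noteq> 0\<close> by (auto simp: F_def G_def)
  have greatest: "\<exists>a0\<in>A. \<forall>a\<in>A. \<psi> a \<le> \<psi> a0" if "finite A" "A \<noteq> {}" for A
    using Max_in[of "\<psi> ` A"] Max_ge[of "\<psi> ` A"] that by fastforce
  obtain a0 b0 where a0: "a0 \<in> F" "\<And>a. a \<in> F \<Longrightarrow> \<psi> a \<le> \<psi> a0"
    and b0: "b0 \<in> G" "\<And>b. b \<in> G \<Longrightarrow> \<psi> b \<le> \<psi> b0"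
    using greatest[of F] greatest[of G] \<open>finite F\<close> \<open>F \<noteq> {}\<close> \<open>finite G\<close> \<open>G \<noteq> {}\<close> by blast
  \<comment> \<open>The product of the \<open>\<psi>\<close>-leading terms of \<open>f\<close> and \<open>g\<close> cannot cancel.\<close>
  have leading: "(a, b) = (a0, b0)" if "a \<in> F" "b \<in> G" "a + b = a0 + b0" for a b
  proof -
    have le: "\<psi> a \<le> \<psi> a0" "\<psi> b \<le> \<psi> b0"
      using that a0 b0 by simp_all
    have "\<psi> a + \<psi> b = \<psi> a0 + \<psi> b0"
      using that by (metis \<psi>_add)
    then have "\<psi> a = \<psi> a0"
      using le add_less_le_mono[of "\<psi> a" "\<psi> a0" "\<psi> b" "\<psi> b0"] by (metis order_less_le)
    then have "a = a0"
      using \<open>inj \<psi>\<close> by (simp add: inj_eq)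
    then show ?thesis
      using that by simp
  qed
  have "f * g = (\<Sum>(a, b)\<in>F \<times> G.
      Poly_Mapping.single (a + b) (Poly_Mapping.lookup f a * Poly_Mapping.lookup g b))"
    by (subst (1 2) poly_mapping_sum_single)
      (simp add: F_def G_def sum_product sum.cartesian_product mult_single)
  then have "Poly_Mapping.lookup (f * g) (a0 + b0) = (\<Sum>p\<in>F \<times> G.
      if p = (a0, b0) then Poly_Mapping.lookup f a0 * Poly_Mapping.lookup g b0 else 0)"
    by (simp add: lookup_sum lookup_single when_def split_def)
      (intro sum.cong refl, use leading in fastforce)
  also have "\<dots> = Poly_Mapping.lookup f a0 * Poly_Mapping.lookup g b0"
    using a0 b0 \<open>finite F\<close> \<open>finite G\<close> by simp
  also have "\<dots> \<noteq> 0"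
    using a0 b0 by (simp add: F_def G_def in_keys_iff)
  finally show ?thesis
    by auto
qed

lemma mpoly_mult_neq_zero:
  fixes f g :: "('v::finite, 'k::idom) mpoly"
  assumes "f \<noteq> 0" and "g \<noteq> 0"
  shows "f * g \<noteq> 0"
proof -
  \<comment> \<open>Monomials over \<open>'v\<close> carry no linear order; embed them additively into those over \<open>nat\<close>.\<close>
  obtain enc :: "'v \<Rightarrow> nat" where "inj enc"
    using finite_imp_inj_to_nat_seg[OF finite_UNIV] by auto
  define \<psi> :: "('v \<Rightarrow>\<^sub>0 nat) \<Rightarrow> (nat \<Rightarrow>\<^sub>0 nat)" where
    "\<psi> m = (\<Sum>x\<in>UNIV. Poly_Mapping.single (enc x) (Poly_Mapping.lookup m x))" for m
  have "Poly_Mapping.lookup (\<psi> m) (enc x) = Poly_Mapping.lookup m x" for m x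
    using \<open>inj enc\<close> by (simp add: \<psi>_def lookup_sum lookup_single when_def inj_eq)
  then have "inj \<psi>"
    by (metis injI poly_mapping_eqI)
  moreover have "\<psi> (a + b) = \<psi> a + \<psi> b" for a b
    by (simp add: \<psi>_def lookup_add single_add sum.distrib)
  ultimately show ?thesis
    using mult_neq_zero_if_order_embedding assms by blast
qed

lemma keys_add_nat:
  "Poly_Mapping.keys (m + n :: 'v \<Rightarrow>\<^sub>0 nat) = Poly_Mapping.keys m \<union> Poly_Mapping.keys n"
  by (auto simp: in_keys_iff lookup_add)

lemma lookup_mult_single_one:
  fixes g :: "'a::cancel_comm_monoid_add \<Rightarrow>\<^sub>0 'k::semiring_1"
  shows "Poly_Mapping.lookup (g * Poly_Mapping.single a 1) (m + a) = Poly_Mapping.lookup g m"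
proof -
  have "g * Poly_Mapping.single a 1
      = (\<Sum>p\<in>Poly_Mapping.keys g. Poly_Mapping.single (p + a) (Poly_Mapping.lookup g p))"
    by (subst poly_mapping_sum_single) (simp add: sum_distrib_right mult_single)
  then show ?thesis
    by (simp add: lookup_sum lookup_single when_def in_keys_iff)
qed

lemma keys_mult_single_one:
  fixes g :: "'a::cancel_comm_monoid_add \<Rightarrow>\<^sub>0 'k::semiring_1"
  shows "Poly_Mapping.keys (g * Poly_Mapping.single a 1) = (\<lambda>m. m + a) ` Poly_Mapping.keys g"
  using keys_mult[of g "Poly_Mapping.single a 1"]
  by (auto simp: in_keys_iff lookup_mult_single_one)

lemma is_ideal_mult_left: "is_ideal I \<Longrightarrow> a \<in> I \<Longrightarrow> r * a \<in> I"
  by (simp add: is_ideal_def)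

lemma is_ideal_mult_right: "is_ideal I \<Longrightarrow> a \<in> I \<Longrightarrow> a * r \<in> I"
  by (metis is_ideal_def mult.commute)

lemma is_ideal_diff:
  assumes "is_ideal I" and "a \<in> I" and "b \<in> I"
  shows "a - b \<in> I"
proof -
  have "a + (-1) * b \<in> I"
    using assms unfolding is_ideal_def by blast
  then show ?thesis
    by simp
qed

lemma is_ideal_sum: "is_ideal I \<Longrightarrow> (\<And>x. x \<in> A \<Longrightarrow> h x \<in> I) \<Longrightarrow> sum h A \<in> I"
  by (induction A rule: infinite_finite_induct) (auto simp: is_ideal_def)

section \<open>Squarefree monomial ideals\<close>

definition set_monomial :: "'v set \<Rightarrow> ('v \<Rightarrow>\<^sub>0 nat)" where
  "set_monomial A = (\<Sum>x\<in>A. Poly_Mapping.single x 1)"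

definition sqfree_ideal :: "'v set set \<Rightarrow> ('v, 'k::comm_ring_1) mpoly set" where
  "sqfree_ideal \<S> = {f. \<forall>m\<in>Poly_Mapping.keys f. \<exists>s\<in>\<S>. s \<subseteq> Poly_Mapping.keys m}"
lemma lookup_set_monomial:
  "finite A \<Longrightarrow> Poly_Mapping.lookup (set_monomial A) x = (if x \<in> A then 1 else 0)"
  by (simp add: set_monomial_def lookup_sum lookup_single when_def)

lemma keys_set_monomial: "finite A \<Longrightarrow> Poly_Mapping.keys (set_monomial A) = A"
  by (auto simp: in_keys_iff lookup_set_monomial split: if_splits)

lemma mon_deg_set_monomial: "finite A \<Longrightarrow> mon_deg (set_monomial A) = card A"
  by (simp add: mon_deg_def keys_set_monomial lookup_set_monomial)

lemma is_ideal_sqfree_ideal: "is_ideal (sqfree_ideal \<S> :: ('v, 'k::comm_ring_1) mpoly set)"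
  unfolding is_ideal_def
proof (intro conjI ballI allI)
  fix a b r :: "('v, 'k) mpoly"
  assume a: "a \<in> sqfree_ideal \<S>"
  show "r * a \<in> sqfree_ideal \<S>"
    unfolding sqfree_ideal_def
  proof (intro CollectI ballI)
    fix m
    assume "m \<in> Poly_Mapping.keys (r * a)"
    then obtain p q where m: "m = p + q" and q: "q \<in> Poly_Mapping.keys a"
      using keys_mult[of r a] by blast
    obtain s where "s \<in> \<S>" "s \<subseteq> Poly_Mapping.keys q"
      using a q by (auto simp: sqfree_ideal_def)
    then show "\<exists>s\<in>\<S>. s \<subseteq> Poly_Mapping.keys m"
      unfolding m keys_add_nat by blast
  qed
  assume "b \<in> sqfree_ideal \<S>"
  then show "a + b \<in> sqfree_ideal \<S>"
    using a keys_add[of a b] by (auto simp: sqfree_ideal_def)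
qed (simp add: sqfree_ideal_def)

lemma ideal_gen_set_monomials:
  fixes \<S> :: "'v set set"
  assumes "\<And>s. s \<in> \<S> \<Longrightarrow> finite s"
  shows "ideal_gen ((\<lambda>s. Poly_Mapping.single (set_monomial s) 1) ` \<S>)
    = (sqfree_ideal \<S> :: ('v, 'k::comm_ring_1) mpoly set)" (is "ideal_gen ?G = ?J")
proof
  show "ideal_gen ?G \<subseteq> ?J"
    unfolding ideal_gen_def using is_ideal_sqfree_ideal assms
    by (intro Inter_lower) (auto simp: sqfree_ideal_def keys_set_monomial)
next
  show "?J \<subseteq> ideal_gen ?G"
  proof
    fix f :: "('v, 'k) mpoly"
    assume f: "f \<in> ?J"
    show "f \<in> ideal_gen ?G"
      unfolding ideal_gen_def
    proof (rule InterI)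
      fix I :: "('v, 'k) mpoly set"
      assume "I \<in> {I. is_ideal I \<and> ?G \<subseteq> I}"
      then have I: "is_ideal I"
        and gens: "\<And>s. s \<in> \<S> \<Longrightarrow> Poly_Mapping.single (set_monomial s) 1 \<in> I"
        by auto
      have "Poly_Mapping.single m (Poly_Mapping.lookup f m) \<in> I" if m: "m \<in> Poly_Mapping.keys f" for m
      proof -
        obtain s where s: "s \<in> \<S>" "s \<subseteq> Poly_Mapping.keys m"
          using f m by (auto simp: sqfree_ideal_def)
        have "(m - set_monomial s) + set_monomial s = m"
          using s assms[of s]
          by (intro poly_mapping_eqI) (auto simp: lookup_add lookup_minus lookup_set_monomial in_keys_iff)
        then have "Poly_Mapping.single m (Poly_Mapping.lookup f m) =
            Poly_Mapping.single (m - set_monomial s) (Poly_Mapping.lookup f m)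
              * Poly_Mapping.single (set_monomial s) 1"
          by (simp add: mult_single)
        then show ?thesis
          using is_ideal_mult_left[OF I gens[OF s(1)]] by simp
      qed
      then show "f \<in> I"
        using poly_mapping_sum_single[of f] is_ideal_sum[OF I] by metis
    qed
  qed
qed

lemma sqfree_ideal_mono:
  fixes \<S> \<T> :: "'v set set"
  assumes "\<And>s. s \<in> \<S> \<Longrightarrow> \<exists>t\<in>\<T>. t \<subseteq> s"
  shows "sqfree_ideal \<S> \<subseteq> (sqfree_ideal \<T> :: ('v, 'k::comm_ring_1) mpoly set)"
  unfolding sqfree_ideal_def
proof (intro subsetI CollectI ballI)
  fix f :: "('v, 'k) mpoly" and m
  assume "f \<in> {f. \<forall>m\<in>Poly_Mapping.keys f. \<exists>s\<in>\<S>. s \<subseteq> Poly_Mapping.keys m}"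
    and "m \<in> Poly_Mapping.keys f"
  then obtain s where "s \<in> \<S>" "s \<subseteq> Poly_Mapping.keys m"
    by blast
  with assms show "\<exists>t\<in>\<T>. t \<subseteq> Poly_Mapping.keys m"
    by (meson order_trans)
qed

lemma colon_sqfree_ideal_set_monomial:
  assumes "finite A"
  shows "colon (sqfree_ideal \<S>) (Poly_Mapping.single (set_monomial A) 1)
    = (sqfree_ideal ((\<lambda>s. s - A) ` \<S>) :: ('v, 'k::comm_ring_1) mpoly set)"
proof -
  have "s \<subseteq> Poly_Mapping.keys (m + set_monomial A) \<longleftrightarrow> s - A \<subseteq> Poly_Mapping.keys m" for s m
    using assms by (auto simp: keys_add_nat keys_set_monomial)
  then show ?thesis
    by (simp add: colon_def sqfree_ideal_def keys_mult_single_one)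
qed

lemma mem_sqfree_ideal_singletons:
  "f \<in> sqfree_ideal ((\<lambda>x. {x}) ` S) \<longleftrightarrow> (\<forall>m\<in>Poly_Mapping.keys f. Poly_Mapping.keys m \<inter> S \<noteq> {})"
  by (auto simp: sqfree_ideal_def)

lemma prime_ideal_sqfree_ideal_singletons:
  "prime_ideal (sqfree_ideal ((\<lambda>x. {x}) ` S) :: ('v::finite, 'k::idom) mpoly set)"
  (is "prime_ideal ?P")
proof -
  \<comment> \<open>\<open>low p\<close> is the part of \<open>p\<close> free of the variables in \<open>S\<close>; \<open>p\<close> lies in the ideal iff \<open>low p = 0\<close>.\<close>
  define avoids where "avoids m \<longleftrightarrow> Poly_Mapping.keys m \<inter> S = {}" for m :: "'v \<Rightarrow>\<^sub>0 nat"
  define low :: "('v, 'k) mpoly \<Rightarrow> ('v, 'k) mpoly"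
    where "low = Poly_Mapping.mapp (\<lambda>m c. if avoids m then c else 0)"
  have lookup_low: "Poly_Mapping.lookup (low p) m = (if avoids m then Poly_Mapping.lookup p m else 0)"
    for p m
    by (simp add: low_def lookup_mapp when_def in_keys_iff)
  have high_in_P: "p - low p \<in> ?P" for p
    by (auto simp: mem_sqfree_ideal_singletons in_keys_iff lookup_minus lookup_low avoids_def
        split: if_splits)
  have avoiding_in_P: "c = 0" if "c \<in> ?P" "\<And>m. m \<in> Poly_Mapping.keys c \<Longrightarrow> avoids m" for c
  proof -
    have "Poly_Mapping.keys c = {}"
      using that unfolding mem_sqfree_ideal_singletons avoids_def by blast
    then show ?thesis
      by simp
  qed
  have low_avoids: "avoids m" if m: "m \<in> Poly_Mapping.keys (low a * low b)" for a b m
  proof -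
    obtain p q where "m = p + q" "p \<in> Poly_Mapping.keys (low a)" "q \<in> Poly_Mapping.keys (low b)"
      using m keys_mult[of "low a" "low b"] by blast
    then show ?thesis
      by (auto simp: in_keys_iff lookup_low avoids_def keys_add_nat split: if_splits)
  qed
  have I: "is_ideal ?P"
    by (rule is_ideal_sqfree_ideal)
  have "a \<in> ?P \<or> b \<in> ?P" if ab: "a * b \<in> ?P" for a b
  proof (rule ccontr)
    assume "\<not> (a \<in> ?P \<or> b \<in> ?P)"
    then have "low a \<noteq> 0" "low b \<noteq> 0"
      using high_in_P[of a] high_in_P[of b] by auto
    have "low a * low b = a * b - (a - low a) * b - low a * (b - low b)"
      by (simp add: algebra_simps)
    also have "\<dots> \<in> ?P"
      using is_ideal_mult_right[OF I high_in_P] is_ideal_mult_left[OF I high_in_P]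
      by (intro is_ideal_diff[OF I] ab)
    finally have "low a * low b = 0"
      using avoiding_in_P low_avoids by blast
    with \<open>low a \<noteq> 0\<close> \<open>low b \<noteq> 0\<close> show False
      using mpoly_mult_neq_zero by blast
  qed
  moreover have "(1 :: ('v, 'k) mpoly) \<notin> ?P"
    by (simp add: mem_sqfree_ideal_singletons)
  ultimately show ?thesis
    using I by (auto simp: prime_ideal_def)
qed


section \<open>Edge ideals\<close>

definition indep_set :: "'v set set \<Rightarrow> 'v set \<Rightarrow> bool" where
  "indep_set E A \<longleftrightarrow> (\<forall>x\<in>A. \<forall>y\<in>A. \<not> adj E x y)"

definition neighbourhood :: "'v set set \<Rightarrow> 'v set \<Rightarrow> 'v set" where
  "neighbourhood E A = {v. \<exists>a\<in>A. adj E v a}"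

lemma adj_sym: "adj E x y \<Longrightarrow> adj E y x"
  by (auto simp: adj_def insert_commute)

lemma not_adj_self [simp]: "\<not> adj E x x"
  by (simp add: adj_def)

lemma simple_graph_edgeE:
  assumes "simple_graph E" and "e \<in> E"
  obtains x y where "e = {x, y}" and "adj E x y"
  using assms by (auto simp: simple_graph_def card_2_iff adj_def)

lemma vertex_cover_mono: "vertex_cover E C \<Longrightarrow> C \<subseteq> D \<Longrightarrow> vertex_cover E D"
  by (auto simp: vertex_cover_def)

lemma vertex_cover_UNIV: "simple_graph E \<Longrightarrow> vertex_cover E UNIV"
  by (auto simp: vertex_cover_def simple_graph_def)

lemma edge_ideal_eq_sqfree_ideal:
  assumes "simple_graph E"
  shows "edge_ideal E = (sqfree_ideal E :: ('v, 'k::field) mpoly set)"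
proof -
  have var_mult: "var x * var y = Poly_Mapping.single (set_monomial {x, y}) (1::'k)"
    if "x \<noteq> y" for x y :: 'v
    using that by (simp add: var_def mult_single set_monomial_def)
  have "{var x * var y | x y. {x, y} \<in> E \<and> x \<noteq> y}
      = (\<lambda>s. Poly_Mapping.single (set_monomial s) (1::'k)) ` E" (is "?L = ?R")
  proof
    show "?L \<subseteq> ?R"
      using var_mult by blast
    show "?R \<subseteq> ?L"
    proof
      fix z
      assume "z \<in> ?R"
      then obtain e where "e \<in> E" and z: "z = Poly_Mapping.single (set_monomial e) 1"
        by blast
      then obtain x y where "e = {x, y}" "adj E x y"
        using assms simple_graph_edgeE by blast
      then have "z = var x * var y" "{x, y} \<in> E" "x \<noteq> y"
        using \<open>e \<in> E\<close> z var_mult by (auto simp: adj_def)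
      then show "z \<in> ?L"
        by blast
    qed
  qed
  moreover have "finite e" if "e \<in> E" for e
    using assms that by (auto simp: simple_graph_def card_2_iff)
  ultimately show ?thesis
    unfolding edge_ideal_def by (simp add: ideal_gen_set_monomials)
qed

lemma colon_edge_ideal_indep_set:
  fixes E :: "'v::finite set set"
  assumes "simple_graph E" and "indep_set E A" and "vertex_cover E (neighbourhood E A)"
  shows "colon (edge_ideal E) (Poly_Mapping.single (set_monomial A) 1)
    = (sqfree_ideal ((\<lambda>x. {x}) ` neighbourhood E A) :: ('v, 'k::field) mpoly set)"
proof -
  have "neighbourhood E A \<inter> A = {}"
    using \<open>indep_set E A\<close> by (auto simp: indep_set_def neighbourhood_def)
  then have "\<exists>y\<in>neighbourhood E A. {y} \<subseteq> e - A" if "e \<in> E" for e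
    using \<open>vertex_cover E (neighbourhood E A)\<close> that unfolding vertex_cover_def by blast
  moreover have "\<exists>e\<in>E. e - A \<subseteq> {y}" if y: "y \<in> neighbourhood E A" for y
  proof -
    obtain a where "a \<in> A" "adj E y a"
      using y by (auto simp: neighbourhood_def)
    then show ?thesis
      by (intro bexI[of _ "{y, a}"]) (auto simp: adj_def)
  qed
  ultimately have "sqfree_ideal ((\<lambda>e. e - A) ` E)
      = (sqfree_ideal ((\<lambda>x. {x}) ` neighbourhood E A) :: ('v, 'k) mpoly set)"
    by (intro subset_antisym sqfree_ideal_mono) auto
  then show ?thesis
    using assms(1) by (simp add: edge_ideal_eq_sqfree_ideal colon_sqfree_ideal_set_monomial)
qed

lemma v_number_candidate_indep_set:
  fixes E :: "'v::finite set set"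
  assumes "simple_graph E" and "indep_set E A" and "vertex_cover E (neighbourhood E A)"
  shows "\<exists>f P. homogeneous_of_deg (card A) f \<and> P \<in> Ass (edge_ideal E :: ('v, 'k::field) mpoly set)
    \<and> colon (edge_ideal E) f = P"
proof (intro exI conjI)
  let ?f = "Poly_Mapping.single (set_monomial A) 1 :: ('v, 'k) mpoly"
  show "homogeneous_of_deg (card A) ?f"
    by (simp add: homogeneous_of_deg_def mon_deg_set_monomial)
  have "prime_ideal (colon (edge_ideal E) ?f)"
    unfolding colon_edge_ideal_indep_set[OF assms] by (rule prime_ideal_sqfree_ideal_singletons)
  then show "colon (edge_ideal E) ?f \<in> Ass (edge_ideal E)"
    by (auto simp: Ass_def)
qed (rule refl)

lemma v_number_edge_ideal_le_card:
  fixes E :: "'v::finite set set"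
  assumes "simple_graph E" and "indep_set E A" and "vertex_cover E (neighbourhood E A)"
  shows "v_number (edge_ideal E :: ('v, 'k::field) mpoly set) \<le> card A"
  unfolding v_number_def by (rule Least_le) (rule v_number_candidate_indep_set[OF assms])

lemma card_keys_le_mon_deg: "card (Poly_Mapping.keys m) \<le> mon_deg m"
  unfolding mon_deg_def
  by (rule order_trans[OF _ sum_mono[of _ "\<lambda>_. 1"]]) (auto simp: in_keys_iff Suc_le_eq)

lemma vertex_cover_vars_in_prime:
  fixes E :: "'v set set" and P :: "('v, 'k::field) mpoly set"
  assumes "simple_graph E" and "prime_ideal P" and "edge_ideal E \<subseteq> P"
  shows "vertex_cover E {x. var x \<in> P}"
  unfolding vertex_cover_def
proof
  fix e
  assume "e \<in> E"
  then obtain x y where e: "e = {x, y}" "adj E x y"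
    using assms(1) simple_graph_edgeE by blast
  then have "var x * var y \<in> (edge_ideal E :: ('v, 'k) mpoly set)"
    using \<open>e \<in> E\<close> unfolding edge_ideal_def ideal_gen_def adj_def by blast
  then have "var x \<in> P \<or> var y \<in> P"
    using assms(2,3) by (auto simp: prime_ideal_def)
  then show "e \<inter> {x. var x \<in> P} \<noteq> {}"
    using e by auto
qed

lemma mem_neighbourhood_if_var_mult_in_edge_ideal:
  fixes E :: "'v set set" and f :: "('v, 'k::field) mpoly"
  assumes "simple_graph E" and "u \<in> Poly_Mapping.keys f"
    and no_edge: "\<And>e. e \<in> E \<Longrightarrow> \<not> e \<subseteq> Poly_Mapping.keys u"
    and "var x * f \<in> edge_ideal E"
  shows "x \<in> neighbourhood E (Poly_Mapping.keys u)"
proof -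
  have "f * Poly_Mapping.single (Poly_Mapping.single x 1) 1 \<in> sqfree_ideal E"
    using assms(1,4) by (simp add: edge_ideal_eq_sqfree_ideal var_def mult.commute)
  moreover have "u + Poly_Mapping.single x 1
      \<in> Poly_Mapping.keys (f * Poly_Mapping.single (Poly_Mapping.single x 1) 1)"
    using assms(2) by (simp add: keys_mult_single_one)
  ultimately obtain e where "e \<in> E" "e \<subseteq> insert x (Poly_Mapping.keys u)"
    by (auto simp: sqfree_ideal_def keys_add_nat)
  moreover obtain p q where "e = {p, q}" "adj E p q"
    using assms(1) \<open>e \<in> E\<close> simple_graph_edgeE by blast
  ultimately show ?thesis
    using no_edge[of e] adj_sym[of E p q] by (auto simp: neighbourhood_def)
qed

lemma indep_set_dominating_if_prime_colon:
  fixes E :: "'v::finite set set" and f :: "('v, 'k::field) mpoly"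
  assumes "simple_graph E" and prime: "prime_ideal (colon (edge_ideal E) f)"
    and "homogeneous_of_deg d f"
  obtains A where "indep_set E A" and "vertex_cover E (neighbourhood E A)" and "card A \<le> d"
proof -
  let ?I = "edge_ideal E :: ('v, 'k) mpoly set"
  let ?P = "colon ?I f"
  have I_eq: "?I = sqfree_ideal E"
    using assms(1) by (rule edge_ideal_eq_sqfree_ideal)
  have "is_ideal ?I"
    unfolding I_eq by (rule is_ideal_sqfree_ideal)
  have "f \<notin> ?I"
  proof
    assume "f \<in> ?I"
    then have "?P = UNIV"
      using \<open>is_ideal ?I\<close> by (auto simp: colon_def intro: is_ideal_mult_left)
    then show False
      using prime by (simp add: prime_ideal_def)
  qed
  then obtain u where u: "u \<in> Poly_Mapping.keys f"
    and no_edge: "\<And>e. e \<in> E \<Longrightarrow> \<not> e \<subseteq> Poly_Mapping.keys u"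
    unfolding I_eq sqfree_ideal_def by blast
  define A where "A = Poly_Mapping.keys u"
  have "indep_set E A"
    using no_edge by (auto simp: indep_set_def adj_def A_def)
  moreover have "card A \<le> d"
    using card_keys_le_mon_deg[of u] u \<open>homogeneous_of_deg d f\<close>
    by (simp add: A_def homogeneous_of_deg_def)
  moreover have "vertex_cover E (neighbourhood E A)"
  proof (rule vertex_cover_mono)
    show "vertex_cover E {x. var x \<in> ?P}"
      using assms(1) prime \<open>is_ideal ?I\<close>
      by (intro vertex_cover_vars_in_prime) (auto simp: colon_def intro: is_ideal_mult_right)
    show "{x. var x \<in> ?P} \<subseteq> neighbourhood E A"
      using mem_neighbourhood_if_var_mult_in_edge_ideal[OF assms(1) u no_edge]
      by (auto simp: colon_def A_def)
  qed
  ultimately show ?thesis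
    using that by blast
qed

lemma exists_maximal_indep_set_dominating:
  fixes E :: "'v::finite set set"
  assumes "simple_graph E" and "vertex_cover E D" and "B \<subseteq> D" and "indep_set E B"
  obtains A where "B \<subseteq> A" and "A \<subseteq> D" and "indep_set E A"
    and "vertex_cover E (neighbourhood E A)"
proof -
  define F where "F = {A. B \<subseteq> A \<and> A \<subseteq> D \<and> indep_set E A}"
  have "finite F" and "B \<in> F"
    using assms(3,4) by (simp_all add: F_def)
  then obtain A where "A \<in> F" and maximal: "\<And>A'. A' \<in> F \<Longrightarrow> A \<subseteq> A' \<Longrightarrow> A = A'"
    using finite_has_maximal2[of F B] by metis
  then have A: "B \<subseteq> A" "A \<subseteq> D" "indep_set E A"
    by (simp_all add: F_def)
  have dominated: "u \<in> neighbourhood E A" if "u \<in> D" "u \<notin> A" for u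
  proof (rule ccontr)
    assume "u \<notin> neighbourhood E A"
    then have "indep_set E (insert u A)"
      using A(3) by (auto simp: indep_set_def neighbourhood_def dest: adj_sym)
    then show False
      using A maximal[of "insert u A"] that by (auto simp: F_def)
  qed
  have "vertex_cover E (neighbourhood E A)"
    unfolding vertex_cover_def
  proof
    fix e
    assume "e \<in> E"
    then obtain x y where e: "e = {x, y}" "adj E x y"
      using assms(1) simple_graph_edgeE by blast
    have "x \<in> D \<or> y \<in> D"
      using assms(2) \<open>e \<in> E\<close> e by (auto simp: vertex_cover_def)
    then show "e \<inter> neighbourhood E A \<noteq> {}"
      using dominated e adj_sym[OF e(2)] by (auto simp: neighbourhood_def)
  qed
  with A show ?thesis
    using that by blast
qed

lemma exists_indep_set_card_le_v_number:
  fixes E :: "'v::finite set set"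
  assumes "simple_graph E"
  obtains A where "indep_set E A" and "vertex_cover E (neighbourhood E A)"
    and "card A \<le> v_number (edge_ideal E :: ('v, 'k::field) mpoly set)"
proof -
  let ?I = "edge_ideal E :: ('v, 'k) mpoly set"
  obtain A0 where "indep_set E A0" "vertex_cover E (neighbourhood E A0)"
    using exists_maximal_indep_set_dominating[OF assms vertex_cover_UNIV[OF assms], of "{}"]
    by (auto simp: indep_set_def)
  then have "\<exists>f P. homogeneous_of_deg (card A0) f \<and> P \<in> Ass ?I \<and> colon ?I f = P"
    using assms by (intro v_number_candidate_indep_set)
  then have "\<exists>f P. homogeneous_of_deg (v_number ?I) f \<and> P \<in> Ass ?I \<and> colon ?I f = P"
    unfolding v_number_def by (rule LeastI)
  then obtain f where "homogeneous_of_deg (v_number ?I) f" "prime_ideal (colon ?I f)"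
    by (auto simp: Ass_def)
  then show ?thesis
    using indep_set_dominating_if_prime_colon[OF assms] that by blast
qed

section \<open>Vertex covers and star forests\<close>

lemma cover_number_le_card: "vertex_cover E C \<Longrightarrow> cover_number E \<le> card C"
  unfolding cover_number_def by (rule Least_le) blast

lemma exists_minimum_vertex_cover:
  assumes "simple_graph E"
  obtains C where "vertex_cover E C" and "card C = cover_number E"
  using that vertex_cover_UNIV[OF assms] LeastI_ex[of "\<lambda>n. \<exists>C. vertex_cover E C \<and> card C = n"]
  unfolding cover_number_def by blast

lemma v_number_edge_ideal_le_cover_number:
  fixes E :: "'v::finite set set"
  assumes "simple_graph E"
  shows "v_number (edge_ideal E :: ('v, 'k::field) mpoly set) \<le> cover_number E"
proof -
  obtain C where C: "vertex_cover E C" "card C = cover_number E"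
    using assms exists_minimum_vertex_cover by blast
  obtain A where "A \<subseteq> C" "indep_set E A" "vertex_cover E (neighbourhood E A)"
    using exists_maximal_indep_set_dominating[OF assms C(1), of "{}"]
    by (auto simp: indep_set_def)
  then have "v_number (edge_ideal E :: ('v, 'k) mpoly set) \<le> card A"
    using assms by (intro v_number_edge_ideal_le_card)
  also have "\<dots> \<le> card C"
    using \<open>A \<subseteq> C\<close> by (intro card_mono) simp_all
  finally show ?thesis
    using C(2) by simp
qed

definition star_forest :: "'v set set \<Rightarrow> bool" where
  "star_forest E \<longleftrightarrow> (\<forall>v. (\<exists>e\<in>E. v \<in> e) \<longrightarrow> is_star_on E (component E v))"

lemma component_eq_if_adj:
  assumes "adj E v c"
  shows "component E v = component E c"
proof -
  have "(adj E)\<^sup>*\<^sup>* v u \<longleftrightarrow> (adj E)\<^sup>*\<^sup>* c u" for u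
    using converse_rtranclp_into_rtranclp[of "adj E" v c] converse_rtranclp_into_rtranclp[of "adj E" c v]
      assms adj_sym[OF assms]
    by blast
  then show ?thesis
    by (simp add: component_def)
qed

lemma component_subset_if_closed:
  assumes "c \<in> S" and closed: "\<And>x y. x \<in> S \<Longrightarrow> adj E x y \<Longrightarrow> y \<in> S"
  shows "component E c \<subseteq> S"
proof
  fix y
  assume "y \<in> component E c"
  then have "(adj E)\<^sup>*\<^sup>* c y"
    by (simp add: component_def)
  then show "y \<in> S"
  proof (induction rule: rtranclp_induct)
    case base
    then show ?case
      using \<open>c \<in> S\<close> .
  next
    case (step y z)
    then show ?case
      using closed by blast
  qed
qed

lemma edge_subset_component:
  assumes "adj E x y" and "x \<in> component E k"
  shows "{x, y} \<subseteq> component E k"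
  using assms rtranclp.rtrancl_into_rtrancl[of "adj E" k x y] by (simp add: component_def)

lemma is_star_on_closed_neighbourhood:
  assumes "simple_graph E" and "adj E c d"
    and no_triangle: "\<And>a b. adj E c a \<Longrightarrow> adj E c b \<Longrightarrow> \<not> adj E a b"
  shows "is_star_on E (insert c {x. adj E c x})"
  unfolding is_star_on_def
proof (intro bexI[of _ c] conjI ballI impI)
  show "insert c {x. adj E c x} - {c} \<noteq> {}"
    using \<open>adj E c d\<close> by auto
  show "{c, x} \<in> E" if "x \<in> insert c {x. adj E c x} - {c}" for x
    using that by (auto simp: adj_def)
  show "c \<in> e" if "e \<in> E" and "e \<subseteq> insert c {x. adj E c x}" for e
  proof (rule ccontr)
    assume "c \<notin> e"
    obtain a b where "e = {a, b}" "adj E a b"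
      using assms(1) \<open>e \<in> E\<close> simple_graph_edgeE by blast
    then show False
      using \<open>c \<notin> e\<close> \<open>e \<subseteq> insert c {x. adj E c x}\<close> no_triangle[of a b] by auto
  qed
qed simp

lemma star_forest_if_indep_cover:
  assumes "simple_graph E" and cover: "vertex_cover E C" and "indep_set E C"
    and unique: "\<And>w c c'. w \<notin> C \<Longrightarrow> c \<in> C \<Longrightarrow> c' \<in> C \<Longrightarrow> adj E w c \<Longrightarrow> adj E w c' \<Longrightarrow> c = c'"
  shows "star_forest E"
  unfolding star_forest_def
proof (intro allI impI)
  fix v
  assume "\<exists>e\<in>E. v \<in> e"
  then obtain e where "e \<in> E" "v \<in> e"
    by blast
  then obtain x y where "e = {x, y}" "adj E x y"
    using assms(1) simple_graph_edgeE by blast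
  then obtain q where "adj E v q"
    using \<open>v \<in> e\<close> adj_sym[OF \<open>adj E x y\<close>] by auto
  have in_C: "a \<in> C \<or> b \<in> C" if "adj E a b" for a b
    using cover that by (auto simp: vertex_cover_def adj_def)
  obtain c where "c \<in> C" and vc: "v = c \<or> adj E v c"
    using in_C[OF \<open>adj E v q\<close>] \<open>adj E v q\<close> by blast
  then obtain d where "adj E c d"
    using \<open>adj E v q\<close> adj_sym[of E v c] by auto
  define S where "S = insert c {x. adj E c x}"
  have leaf: "x \<notin> C" if "adj E c x" for x
    using \<open>indep_set E C\<close> \<open>c \<in> C\<close> that by (auto simp: indep_set_def)
  have "component E c \<subseteq> S"
  proof (rule component_subset_if_closed)
    show "c \<in> S"
      by (simp add: S_def)
    show "y \<in> S" if "x \<in> S" and "adj E x y" for x y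
    proof (cases "x = c")
      case True
      then show ?thesis
        using that by (simp add: S_def)
    next
      case False
      then have "adj E c x"
        using that by (simp add: S_def)
      then have "y \<in> C"
        using leaf in_C[OF that(2)] by blast
      then show ?thesis
        using unique[of x y c] leaf adj_sym[OF \<open>adj E c x\<close>] \<open>adj E c x\<close> \<open>c \<in> C\<close> that(2)
        by (simp add: S_def)
    qed
  qed
  moreover have "S \<subseteq> component E c"
    by (auto simp: S_def component_def)
  moreover have "component E v = component E c"
    using vc component_eq_if_adj[of E v c] by auto
  moreover have "is_star_on E S"
    unfolding S_def using assms(1) \<open>adj E c d\<close>
    by (rule is_star_on_closed_neighbourhood) (use leaf in_C in blast)
  ultimately show "is_star_on E (component E v)"
    by simp
qed

lemma smaller_indep_set_dominating_if_not_star_forest: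
  fixes E :: "'v::finite set set"
  assumes "simple_graph E" and "vertex_cover E C" and "\<not> star_forest E"
  obtains A where "indep_set E A" and "vertex_cover E (neighbourhood E A)" and "card A < card C"
proof (cases "indep_set E C")
  case False
  then obtain c c' where "c \<in> C" "c' \<in> C" "adj E c c'"
    by (auto simp: indep_set_def)
  then obtain A where "{c} \<subseteq> A" "A \<subseteq> C" "indep_set E A" "vertex_cover E (neighbourhood E A)"
    using exists_maximal_indep_set_dominating[OF assms(1,2), of "{c}"] by (auto simp: indep_set_def)
  moreover have "c' \<notin> A"
    using \<open>{c} \<subseteq> A\<close> \<open>indep_set E A\<close> \<open>adj E c c'\<close> by (auto simp: indep_set_def)
  ultimately have "card A < card C"
    using \<open>c' \<in> C\<close> by (intro psubset_card_mono) auto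
  with that \<open>indep_set E A\<close> \<open>vertex_cover E (neighbourhood E A)\<close> show ?thesis
    by blast
next
  case True
  have "\<exists>w c c'. w \<notin> C \<and> c \<in> C \<and> c' \<in> C \<and> c \<noteq> c' \<and> adj E w c \<and> adj E w c'"
    using star_forest_if_indep_cover[OF assms(1,2) True] assms(3) by blast
  then obtain w c c' where "w \<notin> C" "c \<in> C" "c' \<in> C" "c \<noteq> c'" "adj E w c" "adj E w c'"
    by blast
  moreover obtain A where "{w} \<subseteq> A" "A \<subseteq> insert w C" "indep_set E A"
    "vertex_cover E (neighbourhood E A)"
    using exists_maximal_indep_set_dominating[OF assms(1) vertex_cover_mono[OF assms(2)],
        of "insert w C" "{w}"]
    by (auto simp: indep_set_def)
  moreover have "c \<notin> A" "c' \<notin> A"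
    using \<open>{w} \<subseteq> A\<close> \<open>indep_set E A\<close> \<open>adj E w c\<close> \<open>adj E w c'\<close> by (auto simp: indep_set_def)
  ultimately have "card A \<le> card (insert w C - {c, c'})"
    by (intro card_mono) auto
  also have "\<dots> = Suc (card C) - 2"
    using \<open>w \<notin> C\<close> \<open>c \<in> C\<close> \<open>c' \<in> C\<close> \<open>c \<noteq> c'\<close> by (simp add: card_Diff_subset)
  also have "\<dots> < card C"
    using card_gt_0_iff[of C] \<open>c \<in> C\<close> by auto
  finally show ?thesis
    using that \<open>indep_set E A\<close> \<open>vertex_cover E (neighbourhood E A)\<close> by blast
qed

lemma cover_number_le_card_if_star_forest:
  assumes "simple_graph E" and "star_forest E" and "vertex_cover E (neighbourhood E K)"
    and "finite K"
  shows "cover_number E \<le> card K"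
proof -
  define K' where "K' = {k \<in> K. \<exists>e\<in>E. k \<in> e}"
  define centre where "centre k = (SOME c. \<forall>e\<in>E. e \<subseteq> component E k \<longrightarrow> c \<in> e)" for k
  have centre: "centre k \<in> e" if "k \<in> K'" "e \<in> E" "e \<subseteq> component E k" for k e
  proof -
    have "is_star_on E (component E k)"
      using \<open>star_forest E\<close> that(1) by (auto simp: star_forest_def K'_def)
    then have "\<exists>c. \<forall>e\<in>E. e \<subseteq> component E k \<longrightarrow> c \<in> e"
      unfolding is_star_on_def by blast
    then show ?thesis
      unfolding centre_def by (rule someI2_ex) (use that(2,3) in blast)
  qed
  have "vertex_cover E (centre ` K')"
    unfolding vertex_cover_def
  proof
    fix e
    assume "e \<in> E"
    then obtain x y where e: "e = {x, y}" "adj E x y"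
      using assms(1) simple_graph_edgeE by blast
    have "e \<inter> neighbourhood E K \<noteq> {}"
      using assms(3) \<open>e \<in> E\<close> by (simp add: vertex_cover_def)
    then obtain t k where "t \<in> e" "k \<in> K" "adj E t k"
      by (auto simp: neighbourhood_def)
    then have "k \<in> K'"
      by (auto simp: K'_def adj_def)
    have "t \<in> component E k"
      using adj_sym[OF \<open>adj E t k\<close>] by (simp add: component_def r_into_rtranclp)
    then have "e \<subseteq> component E k"
      using \<open>t \<in> e\<close> e edge_subset_component[of E x y k] edge_subset_component[of E y x k]
        adj_sym[OF e(2)]
      by (auto simp: insert_commute)
    then show "e \<inter> centre ` K' \<noteq> {}"
      using centre[OF \<open>k \<in> K'\<close> \<open>e \<in> E\<close>] \<open>k \<in> K'\<close> by blast
  qed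
  then have "cover_number E \<le> card (centre ` K')"
    by (rule cover_number_le_card)
  also have "\<dots> \<le> card K'"
    by (rule card_image_le) (simp add: K'_def \<open>finite K\<close>)
  also have "\<dots> \<le> card K"
    by (rule card_mono) (auto simp: K'_def \<open>finite K\<close>)
  finally show ?thesis .
qed

lemma star_forest_if_v_number_eq_cover_number:
  fixes E :: "'v::finite set set"
  assumes "simple_graph E" and "v_number (edge_ideal E :: ('v, 'k::field) mpoly set) = cover_number E"
  shows "star_forest E"
proof (rule ccontr)
  assume "\<not> star_forest E"
  obtain C where C: "vertex_cover E C" "card C = cover_number E"
    using assms(1) exists_minimum_vertex_cover by blast
  obtain A where "indep_set E A" "vertex_cover E (neighbourhood E A)" "card A < card C"
    using smaller_indep_set_dominating_if_not_star_forest[OF assms(1) C(1) \<open>\<not> star_forest E\<close>] .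
  moreover have "v_number (edge_ideal E :: ('v, 'k) mpoly set) \<le> card A"
    using assms(1) calculation(1,2) by (rule v_number_edge_ideal_le_card)
  ultimately show False
    using C(2) assms(2) by simp
qed

lemma cover_number_le_v_number_if_star_forest:
  fixes E :: "'v::finite set set"
  assumes "simple_graph E" and "star_forest E"
  shows "cover_number E \<le> v_number (edge_ideal E :: ('v, 'k::field) mpoly set)"
proof -
  obtain A where "vertex_cover E (neighbourhood E A)"
    and "card A \<le> v_number (edge_ideal E :: ('v, 'k) mpoly set)"
    using exists_indep_set_card_le_v_number[OF assms(1)] by blast
  then show ?thesis
    using cover_number_le_card_if_star_forest[OF assms, of A] by simp
qed

theorem theorem4p1:
  fixes E :: "('v::finite) set set"
  assumes "simple_graph E" and "E \<noteq> {}"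
  shows "v_number (edge_ideal E :: ('v, 'k::field) mpoly set) \<le> cover_number E
    \<and> (v_number (edge_ideal E :: ('v, 'k) mpoly set) = cover_number E \<longleftrightarrow>
        (\<forall>v. (\<exists>e\<in>E. v \<in> e) \<longrightarrow> is_star_on E (component E v)))"
proof -
  let ?v = "v_number (edge_ideal E :: ('v, 'k) mpoly set)"
  have le: "?v \<le> cover_number E"
    using assms(1) by (rule v_number_edge_ideal_le_cover_number)
  have "?v = cover_number E \<longleftrightarrow> star_forest E"
    using le star_forest_if_v_number_eq_cover_number[OF assms(1), where 'k = 'k]
      cover_number_le_v_number_if_star_forest[OF assms(1), where 'k = 'k]
    by (meson antisym)
  with le show ?thesis
    by (simp add: star_forest_def)
qed

end
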